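(* Let $R$ be a commutative ring and $B,B'$ two quadratically presented $R$-modules fitting into exact sequences of $R$-modules $0\to A\to B\to C\to0$ and $0\to A'\to B'\to C\to0$. Then $\mathrm{Fitt}_R(A)\mathrm{Fitt}_R(B')=\mathrm{Fitt}_R(A')\mathrm{Fitt}_R(B)$.
   Context: An $R$-module $N$ is quadratically presented if there exist $m\ge1$ and an exact sequence $R^m\to R^m\to N\to0$. $\mathrm{Fitt}_R$ denotes the $0$th Fitting ideal. *)

theory Defs
  imports Main "HOL.Modules" "HOL-Combinatorics.Permutations"
begin

text \<open>Modules over a commutative ring 'r are modelled with Main's locale module:
  a type 'm :: ab_group_add with a scalar multiplication s :: 'r => 'm => 'm
  such that module s holds (the module is the whole type).\<close>

definition sqdet :: "nat \<Rightarrow> (nat \<Rightarrow> nat \<Rightarrow> 'r::comm_ring_1) \<Rightarrow> 'r" where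
  "sqdet n Q = (\<Sum>p | p permutes {..<n}. of_int (sign p) * (\<Prod>i<n. Q i (p i)))"

definition ideal_gen :: "'r::comm_ring_1 set \<Rightarrow> 'r set" where
  "ideal_gen S = {(\<Sum>a\<in>t. r a * a) | t r. finite t \<and> t \<subseteq> S}"

definition ideal_prod :: "'r::comm_ring_1 set \<Rightarrow> 'r set \<Rightarrow> 'r set" where
  "ideal_prod I J = ideal_gen {a * b | a b. a \<in> I \<and> b \<in> J}"

text \<open>0-th Fitting ideal: the ideal generated by all determinants det(Q) where, for some
  n and some family g_0..g_(n-1) generating M, every row of the n x n matrix Q is a
  relation among the g_i. (This is the ideal generated by the n x n minors of a relation
  matrix for n generators; it is the zero ideal if M is not finitely generated.)\<close>
definition Fitt :: "('r::comm_ring_1 \<Rightarrow> 'm::ab_group_add \<Rightarrow> 'm) \<Rightarrow> 'r set" where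
  "Fitt s = ideal_gen
     {sqdet n Q | n Q. \<exists>g :: nat \<Rightarrow> 'm.
         (\<forall>x. \<exists>c :: nat \<Rightarrow> 'r. x = (\<Sum>i<n. s (c i) (g i)))
       \<and> (\<forall>k<n. (\<Sum>i<n. s (Q k i) (g i)) = 0)}"

text \<open>Quadratically presented: there are m >= 1 and an exact sequence R^m -> R^m -> N -> 0.
  A linear map R^m -> N is c |-> sum c_i g_i, a linear map R^m -> R^m is d |-> P d.\<close>
definition quad_pres :: "('r::comm_ring_1 \<Rightarrow> 'm::ab_group_add \<Rightarrow> 'm) \<Rightarrow> bool" where
  "quad_pres s \<longleftrightarrow> (\<exists>m \<ge> 1. \<exists>(P :: nat \<Rightarrow> nat \<Rightarrow> 'r) (g :: nat \<Rightarrow> 'm).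
       (\<forall>x. \<exists>c :: nat \<Rightarrow> 'r. x = (\<Sum>i<m. s (c i) (g i)))
     \<and> (\<forall>c :: nat \<Rightarrow> 'r. (\<Sum>i<m. s (c i) (g i)) = 0 \<longleftrightarrow>
           (\<exists>d :: nat \<Rightarrow> 'r. \<forall>i<m. c i = (\<Sum>j<m. P i j * d j))))"

definition short_exact ::
  "('r::comm_ring_1 \<Rightarrow> 'a::ab_group_add \<Rightarrow> 'a) \<Rightarrow> ('r \<Rightarrow> 'b::ab_group_add \<Rightarrow> 'b) \<Rightarrow>
   ('r \<Rightarrow> 'c::ab_group_add \<Rightarrow> 'c) \<Rightarrow> ('a \<Rightarrow> 'b) \<Rightarrow> ('b \<Rightarrow> 'c) \<Rightarrow> bool" where
  "short_exact sA sB sC f g \<longleftrightarrow> module_hom sA sB f \<and> module_hom sB sC g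
     \<and> inj f \<and> surj g \<and> range f = {b. g b = 0}"

end

(*
  Let P be the fibre product of B and B' over C. The projections give short exact sequences
  0 -> A -> P -> B' -> 0 and 0 -> A' -> P -> B -> 0, so it suffices to show: if 0 -> A -> P -> Y -> 0
  is exact, P is finitely generated and Y has a presentation R^m -Pi-> R^m -> Y -> 0, then
  Fitt(P) = Fitt(A) (det Pi), because Fitt(Y) = (det Pi).

  Lift generators x of Y to beta in P and choose generators alpha of A whose first m members map to
  the relations sum_i Pi_ij beta_i. Then beta together with the image of alpha generates P, and the
  block matrices [[Pi^T, -I 0], [0, Q]], for relation matrices Q of alpha, are relation matrices of
  this family with determinant det Pi det Q. Conversely the first m entries of any relation of the
  family form a vector Pi d, which is why every relation matrix factors as X [[Pi^T, -I 0], [0, I]]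
  with X a matrix whose last columns are relations of alpha.

  If P is not finitely generated, then neither A nor A' is, and both products vanish.
*)
theory Submission
  imports Defs "Jordan_Normal_Form.Determinant" "HOL-Library.Product_Plus"
begin

(* Jordan_Normal_Form imports HOL-Algebra, whose module would shadow the one of HOL.Modules. *)
hide_const (open) Module.module

section \<open>Ideals\<close>

interpretation ideal: Modules.module "(*) :: 'r::comm_ring_1 \<Rightarrow> 'r \<Rightarrow> 'r"
  by unfold_locales (simp_all add: algebra_simps)

(* For multiplication, scale_scale is associativity, which does not belong in the simpset. *)
lemmas [simp del] = ideal.scale_scale

lemma ideal_gen_eq_span: "ideal_gen = ideal.span"
  by (auto simp: fun_eq_iff ideal_gen_def ideal.span_explicit)

lemma ideal_subspace_mult_preimage:
  assumes "ideal.subspace I"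
  shows "ideal.subspace {b. a * b \<in> I}"
proof (rule ideal.subspaceI)
  show "0 \<in> {b. a * b \<in> I}" using ideal.subspace_0[OF assms] by simp
  show "x + y \<in> {b. a * b \<in> I}" if "x \<in> {b. a * b \<in> I}" "y \<in> {b. a * b \<in> I}" for x y
    using ideal.subspace_add[OF assms] that by (simp add: distrib_left)
  show "c * x \<in> {b. a * b \<in> I}" if "x \<in> {b. a * b \<in> I}" for c x
  proof -
    have "c * (a * x) \<in> I" using ideal.subspace_scale[OF assms] that by simp
    then show ?thesis by (simp add: mult.left_commute)
  qed
qed

lemma ideal_prod_span:
  "ideal_prod (ideal.span X) (ideal.span Y) = ideal.span {x * y | x y. x \<in> X \<and> y \<in> Y}"
  (is "_ = ideal.span ?XY")
proof
  have "a * b \<in> ideal.span ?XY" if a: "a \<in> ideal.span X" and b: "b \<in> ideal.span Y" for a b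
  proof -
    have gen: "x * b \<in> ideal.span ?XY" if "x \<in> X" for x
      using b
    proof (induction b rule: ideal.span_induct)
      case base
      show ?case by (simp add: ideal_subspace_mult_preimage)
    next
      case (step y)
      with \<open>x \<in> X\<close> show ?case by (blast intro: ideal.span_base)
    qed
    from a show ?thesis
    proof (induction a rule: ideal.span_induct)
      case base
      show ?case using ideal_subspace_mult_preimage[of "ideal.span ?XY" b] by (simp add: mult.commute)
    qed (rule gen)
  qed
  then show "ideal_prod (ideal.span X) (ideal.span Y) \<subseteq> ideal.span ?XY"
    unfolding ideal_prod_def ideal_gen_eq_span by (intro ideal.span_minimal) auto
  show "ideal.span ?XY \<subseteq> ideal_prod (ideal.span X) (ideal.span Y)"
    unfolding ideal_prod_def ideal_gen_eq_span by (intro ideal.span_mono) (blast intro: ideal.span_base)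
qed

lemma ideal_prod_zero_left: "ideal_prod {0} J = {0}"
proof -
  have "ideal.span {a * b | a b. a \<in> {0} \<and> b \<in> J} \<subseteq> {0}"
    by (intro ideal.span_minimal) auto
  then show ?thesis
    unfolding ideal_prod_def ideal_gen_eq_span using ideal.span_zero by blast
qed

lemma subspace_ideal_prod: "ideal.subspace (ideal_prod I J)"
  unfolding ideal_prod_def ideal_gen_eq_span by simp

lemma mult_mem_ideal_prod: "a \<in> I \<Longrightarrow> b \<in> J \<Longrightarrow> a * b \<in> ideal_prod I J"
  unfolding ideal_prod_def ideal_gen_eq_span by (blast intro: ideal.span_base)

section \<open>Determinants over a commutative ring\<close>

lemma sum_lessThan_add: "(\<Sum>i<m + (n::nat). f i) = (\<Sum>i<m. f i) + (\<Sum>i<n. f (m + i))"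
  by (induction n) (auto simp: add.assoc)

lemma index_mult_mat_sum:
  "A \<in> carrier_mat n k \<Longrightarrow> B \<in> carrier_mat k m \<Longrightarrow> i < n \<Longrightarrow> j < m \<Longrightarrow>
   (A * B) $$ (i, j) = (\<Sum>l<k. A $$ (i, l) * B $$ (l, j))"
  by (auto simp: index_mult_mat scalar_prod_def atLeast0LessThan intro!: sum.cong)

lemma laplace_mat_first_col:
  "det (mat (Suc n) (Suc n) F) =
   (\<Sum>i<Suc n. F (i, 0) * ((-1) ^ i * det (mat n n (\<lambda>(a, b). F (if a < i then a else Suc a, Suc b)))))"
proof -
  have delete: "mat_delete (mat (Suc n) (Suc n) F) i 0 =
      mat n n (\<lambda>(a, b). F (if a < i then a else Suc a, Suc b))" if "i < Suc n" for i
    unfolding mat_delete_def by (rule eq_matI) (use that in auto)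
  have "det (mat (Suc n) (Suc n) F) =
      (\<Sum>i<Suc n. mat (Suc n) (Suc n) F $$ (i, 0) * cofactor (mat (Suc n) (Suc n) F) i 0)"
    by (rule laplace_expansion_column) auto
  also have "\<dots> = (\<Sum>i<Suc n. F (i, 0) *
      ((-1) ^ i * det (mat n n (\<lambda>(a, b). F (if a < i then a else Suc a, Suc b)))))"
    by (rule sum.cong) (auto simp: cofactor_def delete)
  finally show ?thesis .
qed

lemma det_block_lower_left_zero:
  "(\<And>i j. k \<le> i \<Longrightarrow> j < k \<Longrightarrow> F (i, j) = 0) \<Longrightarrow>
   det (mat (k + N) (k + N) F) = det (mat k k F) * det (mat N N (\<lambda>(i, j). F (k + i, k + j)))"
proof (induction k arbitrary: F)
  case 0
  have "mat N N (\<lambda>(i, j). F (0 + i, 0 + j)) = mat N N F" by (rule eq_matI) auto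
  then show ?case by (simp add: det_def)
next
  case (Suc k)
  define G where "G i = (\<lambda>(a, b). F (if a < i then a else Suc a, Suc b))" for i
  define Z where "Z = det (mat N N (\<lambda>(a, b). F (Suc k + a, Suc k + b)))"
  have "det (mat (Suc k + N) (Suc k + N) F) =
      (\<Sum>i<Suc k + N. F (i, 0) * ((-1) ^ i * det (mat (k + N) (k + N) (G i))))"
    using laplace_mat_first_col[of "k + N" F] by (simp add: G_def)
  also have "\<dots> = (\<Sum>i<Suc k. F (i, 0) * ((-1) ^ i * det (mat (k + N) (k + N) (G i))))
      + (\<Sum>i<N. F (Suc k + i, 0) * ((-1) ^ (Suc k + i) * det (mat (k + N) (k + N) (G (Suc k + i)))))"
    by (rule sum_lessThan_add)
  also have "\<dots> = (\<Sum>i<Suc k. F (i, 0) * ((-1) ^ i * det (mat (k + N) (k + N) (G i))))"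
    using Suc.prems by simp
  also have "\<dots> = (\<Sum>i<Suc k. F (i, 0) * ((-1) ^ i * det (mat k k (G i)))) * Z"
    unfolding sum_distrib_right
  proof (rule sum.cong)
    fix i assume i: "i \<in> {..<Suc k}"
    have "mat N N (\<lambda>(a, b). G i (k + a, k + b)) = mat N N (\<lambda>(a, b). F (Suc k + a, Suc k + b))"
      by (rule eq_matI) (use i in \<open>auto simp: G_def\<close>)
    moreover have "det (mat (k + N) (k + N) (G i)) =
        det (mat k k (G i)) * det (mat N N (\<lambda>(a, b). G i (k + a, k + b)))"
      by (rule Suc.IH) (use i Suc.prems in \<open>auto simp: G_def\<close>)
    ultimately have "det (mat (k + N) (k + N) (G i)) = det (mat k k (G i)) * Z"
      by (simp add: Z_def)
    then show "F (i, 0) * ((-1) ^ i * det (mat (k + N) (k + N) (G i))) =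
        F (i, 0) * ((-1) ^ i * det (mat k k (G i))) * Z"
      by (simp add: mult.assoc)
  qed simp
  also have "(\<Sum>i<Suc k. F (i, 0) * ((-1) ^ i * det (mat k k (G i)))) = det (mat (Suc k) (Suc k) F)"
    unfolding G_def by (rule laplace_mat_first_col[symmetric])
  finally show ?case by (simp add: Z_def)
qed

lemma det_block_upper_right_zero:
  assumes "\<And>i j. i < k \<Longrightarrow> k \<le> j \<Longrightarrow> F (i, j) = 0"
  shows "det (mat (k + N) (k + N) F) = det (mat k k F) * det (mat N N (\<lambda>(i, j). F (k + i, k + j)))"
proof -
  define G where "G = (\<lambda>(i, j). F (j, i))"
  have transpose: "det (mat n n (\<lambda>(i, j). F (l + i, l + j))) = det (mat n n (\<lambda>(i, j). G (l + i, l + j)))"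
    for n l
  proof -
    have "transpose_mat (mat n n (\<lambda>(i, j). F (l + i, l + j))) = mat n n (\<lambda>(i, j). G (l + i, l + j))"
      unfolding G_def by (rule eq_matI) auto
    then show ?thesis by (metis det_transpose mat_carrier)
  qed
  have "det (mat (k + N) (k + N) G) = det (mat k k G) * det (mat N N (\<lambda>(i, j). G (k + i, k + j)))"
    by (rule det_block_lower_left_zero) (simp add: G_def assms)
  then show ?thesis
    using transpose[of "k + N" 0] transpose[of k 0] transpose[of N k] by simp
qed

lemma sqdet_eq_det: "sqdet n Q = det (mat n n (\<lambda>(i, j). Q i j))"
proof -
  have "det (mat n n (\<lambda>(i, j). Q i j)) =
      (\<Sum>p | p permutes {0..<n}. signof p * (\<Prod>i=0..<n. mat n n (\<lambda>(i, j). Q i j) $$ (i, p i)))"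
    by (rule det_def') simp
  also have "\<dots> = (\<Sum>p | p permutes {0..<n}. signof p * (\<Prod>i=0..<n. Q i (p i)))"
  proof (rule sum.cong[OF refl])
    fix p assume "p \<in> {p. p permutes {0..<n}}"
    then have "\<forall>i<n. p i < n" using permutes_in_image by fastforce
    then show "signof p * (\<Prod>i=0..<n. mat n n (\<lambda>(i, j). Q i j) $$ (i, p i)) =
        signof p * (\<Prod>i=0..<n. Q i (p i))" by simp
  qed
  finally show ?thesis unfolding sqdet_def by (simp add: atLeast0LessThan)
qed

lemma sqdet_transpose: "sqdet n Q = det (mat n n (\<lambda>(i, j). Q j i))"
proof -
  have "transpose_mat (mat n n (\<lambda>(i, j). Q i j)) = mat n n (\<lambda>(i, j). Q j i)"
    by (rule eq_matI) auto
  then show ?thesis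
    unfolding sqdet_eq_det by (metis det_transpose mat_carrier)
qed

section \<open>Finite families in a module\<close>

definition lincomb ::
  "('r::comm_ring_1 \<Rightarrow> 'm::ab_group_add \<Rightarrow> 'm) \<Rightarrow> nat \<Rightarrow> (nat \<Rightarrow> 'r) \<Rightarrow> (nat \<Rightarrow> 'm) \<Rightarrow> 'm" where
  "lincomb s n c v = (\<Sum>i<n. s (c i) (v i))"

definition lin_span :: "('r::comm_ring_1 \<Rightarrow> 'm::ab_group_add \<Rightarrow> 'm) \<Rightarrow> nat \<Rightarrow> (nat \<Rightarrow> 'm) \<Rightarrow> 'm set" where
  "lin_span s n v = range (\<lambda>c. lincomb s n c v)"

definition fam_append :: "nat \<Rightarrow> (nat \<Rightarrow> 'a) \<Rightarrow> (nat \<Rightarrow> 'a) \<Rightarrow> nat \<Rightarrow> 'a" where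
  "fam_append n u v l = (if l < n then u l else v (l - n))"

lemma lincomb_cong:
  "(\<And>i. i < n \<Longrightarrow> c i = d i) \<Longrightarrow> (\<And>i. i < n \<Longrightarrow> v i = w i) \<Longrightarrow> lincomb s n c v = lincomb s n d w"
  unfolding lincomb_def by (rule sum.cong) auto

lemma lincomb_split:
  "lincomb s (m + n) c v = lincomb s m c v + lincomb s n (\<lambda>j. c (m + j)) (\<lambda>j. v (m + j))"
  unfolding lincomb_def by (rule sum_lessThan_add)

lemma lincomb_fam_append:
  "lincomb s (m + n) c (fam_append m u v) = lincomb s m c u + lincomb s n (\<lambda>j. c (m + j)) v"
  unfolding lincomb_split by (auto simp: fam_append_def intro: lincomb_cong)

lemma lin_span_eq_UNIV_iff: "lin_span s n v = UNIV \<longleftrightarrow> (\<forall>x. \<exists>c. x = (\<Sum>i<n. s (c i) (v i)))"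
  unfolding lin_span_def lincomb_def by (auto simp: surj_def)

context Modules.module
begin

lemma lincomb_zero_coeffs [simp]: "lincomb scale n (\<lambda>_. 0) v = 0"
  by (simp add: lincomb_def)

lemma lincomb_zero_vectors [simp]: "lincomb scale n c (\<lambda>_. 0) = 0"
  by (simp add: lincomb_def)

lemma lincomb_add_coeffs: "lincomb scale n c v + lincomb scale n d v = lincomb scale n (\<lambda>i. c i + d i) v"
  by (simp add: lincomb_def sum.distrib scale_left_distrib)

lemma lincomb_minus_coeffs: "lincomb scale n (\<lambda>i. - c i) v = - lincomb scale n c v"
  by (simp add: lincomb_def sum_negf)

lemma lincomb_add_vectors: "lincomb scale n c (\<lambda>i. v i + w i) = lincomb scale n c v + lincomb scale n c w"
  by (simp add: lincomb_def sum.distrib scale_right_distrib)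

lemma lincomb_indicator: "j < n \<Longrightarrow> lincomb scale n (\<lambda>l. if l = j then a else 0) v = a *s v j"
  by (simp add: lincomb_def if_distrib[of "\<lambda>r. r *s _"] cong: if_cong)

lemma lincomb_lincomb:
  assumes "\<And>i. i < n \<Longrightarrow> v i = lincomb scale N (C i) h"
  shows "lincomb scale n c v = lincomb scale N (\<lambda>j. \<Sum>i<n. c i * C i j) h"
proof -
  have "lincomb scale n c v = (\<Sum>i<n. \<Sum>j<N. (c i * C i j) *s h j)"
    unfolding lincomb_def by (rule sum.cong) (simp_all add: assms lincomb_def scale_sum_right)
  also have "\<dots> = lincomb scale N (\<lambda>j. \<Sum>i<n. c i * C i j) h"
    unfolding lincomb_def scale_sum_left by (rule sum.swap)
  finally show ?thesis .
qed

lemma lincomb_truncate: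
  assumes "m \<le> n"
  shows "lincomb scale n (\<lambda>k. if k < m then c k else 0) v = lincomb scale m c v"
proof -
  have "lincomb scale (m + (n - m)) (\<lambda>k. if k < m then c k else 0) v = lincomb scale m c v"
    unfolding lincomb_split by (auto intro: lincomb_cong)
  with assms show ?thesis by simp
qed

lemma generator_in_lin_span: "i < n \<Longrightarrow> v i \<in> lin_span scale n v"
  unfolding lin_span_def using lincomb_indicator[of i n 1 v] by (metis rangeI scale_one)

lemma lincomb_in_subspace: "subspace S \<Longrightarrow> (\<And>i. i < n \<Longrightarrow> v i \<in> S) \<Longrightarrow> lincomb scale n c v \<in> S"
  unfolding lincomb_def by (auto intro: subspace_sum subspace_scale)

end

lemma (in module_hom) lincomb_hom: "f (lincomb s1 n c v) = lincomb s2 n c (\<lambda>i. f (v i))"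
  by (simp add: lincomb_def sum scale)

lemma obtain_lincomb_coeffs:
  assumes "\<forall>l<N. h l \<in> lin_span s n g"
  obtains T where "\<forall>l<N. h l = lincomb s n (T l) g"
proof -
  have "\<forall>l\<in>{..<N}. \<exists>c. h l = lincomb s n c g"
    using assms unfolding lin_span_def by auto
  from bchoice[OF this] show ?thesis
    using that by auto
qed

section \<open>Fitting ideals of generating families\<close>

definition relation_minors :: "('r::comm_ring_1 \<Rightarrow> 'm::ab_group_add \<Rightarrow> 'm) \<Rightarrow> nat \<Rightarrow> (nat \<Rightarrow> 'm) \<Rightarrow> 'r set" where
  "relation_minors s n v =
     {det W | W. W \<in> carrier_mat n n \<and> (\<forall>i<n. lincomb s n (\<lambda>j. W $$ (i, j)) v = 0)}"

lemma det_mem_span_relation_minors: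
  assumes "W \<in> carrier_mat (k + N) (k + N)"
    and "\<forall>i<k + N. lincomb s N (\<lambda>j. W $$ (i, k + j)) h = 0"
  shows "det W \<in> ideal.span (relation_minors s N h)"
  using assms
proof (induction k arbitrary: W)
  case 0
  then have "det W \<in> relation_minors s N h"
    unfolding relation_minors_def by auto
  then show ?case by (rule ideal.span_base)
next
  case (Suc k)
  have "det W = (\<Sum>i<Suc k + N. W $$ (i, 0) * cofactor W i 0)"
    by (rule laplace_expansion_column) (use Suc.prems in auto)
  also have "\<dots> \<in> ideal.span (relation_minors s N h)"
  proof (intro ideal.span_sum)
    fix i assume i: "i \<in> {..<Suc k + N}"
    let ?W = "mat_delete W i 0"
    have "?W \<in> carrier_mat (k + N) (k + N)"
      using mat_delete_carrier[OF Suc.prems(1)] by simp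
    moreover have "\<forall>i'<k + N. lincomb s N (\<lambda>j. ?W $$ (i', k + j)) h = 0"
    proof (intro allI impI)
      fix i' assume i': "i' < k + N"
      define r where "r = (if i' < i then i' else Suc i')"
      have "lincomb s N (\<lambda>j. ?W $$ (i', k + j)) h = lincomb s N (\<lambda>j. W $$ (r, Suc k + j)) h"
        by (rule lincomb_cong) (use Suc.prems(1) i' in \<open>auto simp: mat_delete_def r_def\<close>)
      also have "\<dots> = 0"
        using Suc.prems(2) i' by (simp add: r_def)
      finally show "lincomb s N (\<lambda>j. ?W $$ (i', k + j)) h = 0" .
    qed
    ultimately have "det ?W \<in> ideal.span (relation_minors s N h)"
      by (rule Suc.IH)
    then show "W $$ (i, 0) * cofactor W i 0 \<in> ideal.span (relation_minors s N h)"
      unfolding cofactor_def by (intro ideal.span_scale)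
  qed
  finally show ?case .
qed

lemma (in Modules.module) lincomb_mult_tail_zero:
  assumes M: "M \<in> carrier_mat (k + N) (k + N)" and U: "U \<in> carrier_mat (k + N) (k + N)"
    and rows: "\<forall>i<k + N. lincomb scale (k + N) (\<lambda>l. M $$ (i, l)) \<phi> = 0"
    and \<phi>: "\<forall>l<k + N. \<phi> l = lincomb scale N (\<lambda>j. U $$ (l, k + j)) h"
    and i: "i < k + N"
  shows "lincomb scale N (\<lambda>j. (M * U) $$ (i, k + j)) h = 0"
proof -
  have "lincomb scale N (\<lambda>j. (M * U) $$ (i, k + j)) h =
      lincomb scale N (\<lambda>j. \<Sum>l<k + N. M $$ (i, l) * U $$ (l, k + j)) h"
    by (rule lincomb_cong) (auto intro: index_mult_mat_sum[OF M U i])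
  also have "\<dots> = lincomb scale (k + N) (\<lambda>l. M $$ (i, l)) \<phi>"
    by (rule lincomb_lincomb[symmetric]) (use \<phi> in simp)
  also have "\<dots> = 0"
    using rows i by simp
  finally show ?thesis .
qed

context Modules.module
begin

lemma det_mem_relation_minors_fam_append:
  assumes "\<forall>l<N. h l \<in> lin_span scale n g"
    and Q: "Q \<in> carrier_mat n n" "\<forall>i<n. lincomb scale n (\<lambda>j. Q $$ (i, j)) g = 0"
  shows "det Q \<in> relation_minors scale (n + N) (fam_append n g h)"
proof -
  obtain T where T: "\<forall>l<N. h l = lincomb scale n (T l) g"
    using obtain_lincomb_coeffs[OF assms(1)] by blast
  define F where "F = (\<lambda>(i, j).
    if i < n then (if j < n then Q $$ (i, j) else 0) else if j < n then - T (i - n) j else if i = j then 1 else 0)"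
  define M where "M = mat (n + N) (n + N) F"
  have "det M = det (mat n n F) * det (mat N N (\<lambda>(i, j). F (n + i, n + j)))"
    unfolding M_def by (rule det_block_upper_right_zero) (auto simp: F_def)
  also have "mat n n F = Q"
    by (rule eq_matI) (use Q in \<open>auto simp: F_def\<close>)
  also have "mat N N (\<lambda>(i, j). F (n + i, n + j)) = 1\<^sub>m N"
    by (rule eq_matI) (auto simp: F_def)
  finally have "det M = det Q" by simp
  moreover have "lincomb scale (n + N) (\<lambda>j. M $$ (i, j)) (fam_append n g h) = 0" if i: "i < n + N" for i
  proof (cases "i < n")
    case True
    have "lincomb scale n (\<lambda>j. M $$ (i, j)) g = lincomb scale n (\<lambda>j. Q $$ (i, j)) g"
      by (rule lincomb_cong) (use True i in \<open>auto simp: M_def F_def\<close>)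
    moreover have "lincomb scale N (\<lambda>j. M $$ (i, n + j)) h = lincomb scale N (\<lambda>_. 0) h"
      by (rule lincomb_cong) (use True i in \<open>auto simp: M_def F_def\<close>)
    ultimately show ?thesis
      using Q(2) True by (simp add: lincomb_fam_append)
  next
    case False
    have "lincomb scale n (\<lambda>j. M $$ (i, j)) g = lincomb scale n (\<lambda>j. - T (i - n) j) g"
      by (rule lincomb_cong) (use False i in \<open>auto simp: M_def F_def\<close>)
    also have "\<dots> = - h (i - n)"
      using T False i by (simp add: lincomb_minus_coeffs)
    finally have g_part: "lincomb scale n (\<lambda>j. M $$ (i, j)) g = - h (i - n)" .
    have "lincomb scale N (\<lambda>j. M $$ (i, n + j)) h = lincomb scale N (\<lambda>j. if j = i - n then 1 else 0) h"
      by (rule lincomb_cong) (use False i in \<open>auto simp: M_def F_def\<close>)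
    also have "\<dots> = h (i - n)"
      using False i by (simp add: lincomb_indicator)
    finally show ?thesis
      using g_part by (simp add: lincomb_fam_append)
  qed
  moreover have "M \<in> carrier_mat (n + N) (n + N)"
    by (simp add: M_def)
  ultimately show ?thesis
    unfolding relation_minors_def by (intro CollectI exI[of _ M]) auto
qed

lemma det_relation_matrix_fam_append:
  assumes "\<forall>l<n. g l \<in> lin_span scale N h"
    and W: "W \<in> carrier_mat (n + N) (n + N)"
      "\<forall>i<n + N. lincomb scale (n + N) (\<lambda>j. W $$ (i, j)) (fam_append n g h) = 0"
  shows "det W \<in> ideal.span (relation_minors scale N h)"
proof -
  obtain S where S: "\<forall>l<n. g l = lincomb scale N (S l) h"
    using obtain_lincomb_coeffs[OF assms(1)] by blast
  define F where "F = (\<lambda>(l, j).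
    if j < n then (if l = j then 1 else 0) else if l < n then S l (j - n) else if l = j then 1 else 0)"
  define U where "U = mat (n + N) (n + N) F"
  have U: "U \<in> carrier_mat (n + N) (n + N)"
    by (simp add: U_def)
  have "det U = det (mat n n F) * det (mat N N (\<lambda>(i, j). F (n + i, n + j)))"
    unfolding U_def by (rule det_block_lower_left_zero) (auto simp: F_def)
  also have "mat n n F = 1\<^sub>m n"
    by (rule eq_matI) (auto simp: F_def)
  also have "mat N N (\<lambda>(i, j). F (n + i, n + j)) = 1\<^sub>m N"
    by (rule eq_matI) (auto simp: F_def)
  finally have "det U = 1" by simp
  have "fam_append n g h l = lincomb scale N (\<lambda>j. U $$ (l, n + j)) h" if l: "l < n + N" for l
  proof (cases "l < n")
    case True
    then show ?thesis
      using S l by (auto simp: fam_append_def U_def F_def intro: lincomb_cong)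
  next
    case False
    have "lincomb scale N (\<lambda>j. U $$ (l, n + j)) h = lincomb scale N (\<lambda>j. if j = l - n then 1 else 0) h"
      by (rule lincomb_cong) (use False l in \<open>auto simp: U_def F_def\<close>)
    then show ?thesis
      using False l by (simp add: fam_append_def lincomb_indicator)
  qed
  then have "\<forall>i<n + N. lincomb scale N (\<lambda>j. (W * U) $$ (i, n + j)) h = 0"
    using lincomb_mult_tail_zero[OF W(1) U W(2)] by blast
  then have "det (W * U) \<in> ideal.span (relation_minors scale N h)"
    using W(1) U by (intro det_mem_span_relation_minors) auto
  then show ?thesis
    using det_mult[OF W(1) U] \<open>det U = 1\<close> by simp
qed

lemma span_relation_minors_eq:
  assumes "lin_span scale n g = lin_span scale N h"
  shows "ideal.span (relation_minors scale n g) = ideal.span (relation_minors scale N h)"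
proof -
  have "relation_minors scale n g \<subseteq> ideal.span (relation_minors scale N h)"
    if spans: "lin_span scale n g = lin_span scale N h" for n g N h
  proof
    fix x assume "x \<in> relation_minors scale n g"
    then obtain Q where "x = det Q" "Q \<in> carrier_mat n n" "\<forall>i<n. lincomb scale n (\<lambda>j. Q $$ (i, j)) g = 0"
      unfolding relation_minors_def by blast
    moreover have "\<forall>l<N. h l \<in> lin_span scale n g"
      using spans generator_in_lin_span by auto
    ultimately have "x \<in> relation_minors scale (n + N) (fam_append n g h)"
      using det_mem_relation_minors_fam_append by simp
    then obtain W where "x = det W" "W \<in> carrier_mat (n + N) (n + N)"
      "\<forall>i<n + N. lincomb scale (n + N) (\<lambda>j. W $$ (i, j)) (fam_append n g h) = 0"
      unfolding relation_minors_def by blast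
    moreover have "\<forall>l<n. g l \<in> lin_span scale N h"
      using spans generator_in_lin_span by auto
    ultimately show "x \<in> ideal.span (relation_minors scale N h)"
      using det_relation_matrix_fam_append by simp
  qed
  from this[OF assms] this[OF assms[symmetric]] show ?thesis
    by (intro antisym ideal.span_minimal) auto
qed

end

lemma Fitt_eq_span_relation_minors_of_generators:
  "Fitt s = ideal.span (\<Union>{relation_minors s n g | n g. lin_span s n g = UNIV})"
  unfolding Fitt_def ideal_gen_eq_span
proof (intro arg_cong[where f = ideal.span] equalityI subsetI)
  fix z
  assume "z \<in> {sqdet n Q | n Q. \<exists>g. (\<forall>x. \<exists>c. x = (\<Sum>i<n. s (c i) (g i)))
    \<and> (\<forall>k<n. (\<Sum>i<n. s (Q k i) (g i)) = 0)}"
  then obtain n Q g where z: "z = det (mat n n (\<lambda>(i, j). Q i j))" and g: "lin_span s n g = UNIV"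
    and Q: "\<forall>k<n. lincomb s n (Q k) g = 0"
    by (auto simp: lin_span_eq_UNIV_iff lincomb_def sqdet_eq_det)
  have "lincomb s n (\<lambda>j. mat n n (\<lambda>(i, j). Q i j) $$ (k, j)) g = 0" if "k < n" for k
  proof -
    have "lincomb s n (\<lambda>j. mat n n (\<lambda>(i, j). Q i j) $$ (k, j)) g = lincomb s n (Q k) g"
      by (rule lincomb_cong) (use that in auto)
    with Q that show ?thesis by simp
  qed
  then have "z \<in> relation_minors s n g"
    unfolding relation_minors_def z by (intro CollectI exI[of _ "mat n n (\<lambda>(i, j). Q i j)"]) auto
  with g show "z \<in> \<Union>{relation_minors s n g | n g. lin_span s n g = UNIV}"
    by blast
next
  fix z
  assume "z \<in> \<Union>{relation_minors s n g | n g. lin_span s n g = UNIV}"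
  then obtain n g W where g: "lin_span s n g = UNIV" and z: "z = det W" and W: "W \<in> carrier_mat n n"
    and rows: "\<forall>i<n. lincomb s n (\<lambda>j. W $$ (i, j)) g = 0"
    unfolding relation_minors_def by blast
  have "z = sqdet n (\<lambda>i j. W $$ (i, j))"
    unfolding sqdet_eq_det z by (rule arg_cong[where f = det], rule eq_matI) (use W in auto)
  with g rows show "z \<in> {sqdet n Q | n Q. \<exists>g. (\<forall>x. \<exists>c. x = (\<Sum>i<n. s (c i) (g i)))
    \<and> (\<forall>k<n. (\<Sum>i<n. s (Q k i) (g i)) = 0)}"
    unfolding lin_span_eq_UNIV_iff lincomb_def by blast
qed

lemma (in Modules.module) Fitt_eq_span_relation_minors:
  assumes "lin_span scale n g = UNIV"
  shows "Fitt scale = ideal.span (relation_minors scale n g)"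
  unfolding Fitt_eq_span_relation_minors_of_generators
proof (rule antisym)
  have "\<Union>{relation_minors scale N h | N h. lin_span scale N h = UNIV} \<subseteq> ideal.span (relation_minors scale n g)"
    using span_relation_minors_eq assms ideal.span_superset by blast
  then show "ideal.span (\<Union>{relation_minors scale N h | N h. lin_span scale N h = UNIV})
      \<subseteq> ideal.span (relation_minors scale n g)"
    by (simp add: ideal.span_minimal)
  have "relation_minors scale n g \<subseteq> \<Union>{relation_minors scale N h | N h. lin_span scale N h = UNIV}"
    using assms by blast
  then show "ideal.span (relation_minors scale n g)
      \<subseteq> ideal.span (\<Union>{relation_minors scale N h | N h. lin_span scale N h = UNIV})"
    by (rule ideal.span_mono)
qed

lemma Fitt_eq_zero: "\<nexists>n g. lin_span s n g = UNIV \<Longrightarrow> Fitt s = {0}"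
  unfolding Fitt_eq_span_relation_minors_of_generators by simp

section \<open>Quadratic presentations\<close>

definition presented_by ::
  "('r::comm_ring_1 \<Rightarrow> 'm::ab_group_add \<Rightarrow> 'm) \<Rightarrow> nat \<Rightarrow> (nat \<Rightarrow> 'm) \<Rightarrow> (nat \<Rightarrow> nat \<Rightarrow> 'r) \<Rightarrow> bool" where
  "presented_by s m x P \<longleftrightarrow> lin_span s m x = UNIV \<and>
     (\<forall>c. lincomb s m c x = 0 \<longleftrightarrow> (\<exists>d. \<forall>i<m. c i = (\<Sum>j<m. P i j * d j)))"

lemma quad_pres_presented_by:
  assumes "quad_pres s"
  obtains m x P where "presented_by s m x P"
  using assms unfolding quad_pres_def presented_by_def lin_span_eq_UNIV_iff lincomb_def by blast

lemma presented_by_column_relation: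
  assumes "presented_by s m x P" "j < m"
  shows "lincomb s m (\<lambda>i. P i j) x = 0"
proof -
  have "(\<Sum>l<m. P i l * (if l = j then 1 else 0)) = P i j" for i
    using assms(2) by (simp add: if_distrib cong: if_cong)
  then have "\<exists>d. \<forall>i<m. P i j = (\<Sum>l<m. P i l * d l)"
    by (intro exI[of _ "\<lambda>l. if l = j then 1 else 0"]) simp
  then show ?thesis
    using assms(1) unfolding presented_by_def by simp
qed

lemma presented_by_relation_coeffs:
  assumes "presented_by s m x P" "\<forall>r<K. lincomb s m (w r) x = 0"
  obtains D where "\<forall>r<K. \<forall>i<m. w r i = (\<Sum>j<m. P i j * D r j)"
proof -
  have "\<forall>r\<in>{..<K}. \<exists>d. \<forall>i<m. w r i = (\<Sum>j<m. P i j * d j)"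
    using assms unfolding presented_by_def by auto
  from bchoice[OF this] show ?thesis
    using that by auto
qed

lemma det_relation_matrix_presented_by:
  assumes P: "presented_by s m x P" and W: "W \<in> carrier_mat m m"
    and rows: "\<forall>r<m. lincomb s m (\<lambda>i. W $$ (r, i)) x = 0"
  shows "det W \<in> ideal.span {sqdet m P}"
proof -
  obtain D where D: "\<forall>r<m. \<forall>i<m. W $$ (r, i) = (\<Sum>j<m. P i j * D r j)"
    using presented_by_relation_coeffs[OF P rows] by blast
  define DM where "DM = mat m m (\<lambda>(r, j). D r j)"
  define PT where "PT = mat m m (\<lambda>(j, i). P i j)"
  have DM: "DM \<in> carrier_mat m m" and PT: "PT \<in> carrier_mat m m"
    by (simp_all add: DM_def PT_def)
  have "W $$ (r, i) = (DM * PT) $$ (r, i)" if "r < m" "i < m" for r i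
  proof -
    have "W $$ (r, i) = (\<Sum>l<m. DM $$ (r, l) * PT $$ (l, i))"
      using D that by (simp add: DM_def PT_def mult.commute)
    also have "\<dots> = (DM * PT) $$ (r, i)"
      by (rule index_mult_mat_sum[OF DM PT that, symmetric])
    finally show ?thesis .
  qed
  then have "W = DM * PT"
    using W DM PT by (intro eq_matI) auto
  then have "det W = det DM * sqdet m P"
    using det_mult[OF DM PT] by (simp add: PT_def sqdet_transpose)
  then show ?thesis
    by (simp add: ideal.span_base ideal.span_scale)
qed

lemma (in Modules.module) Fitt_presented_by:
  assumes P: "presented_by scale m x P"
  shows "Fitt scale = ideal.span {sqdet m P}"
proof -
  have "relation_minors scale m x \<subseteq> ideal.span {sqdet m P}"
    using det_relation_matrix_presented_by[OF P] unfolding relation_minors_def by blast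
  moreover have "sqdet m P \<in> relation_minors scale m x"
  proof -
    have "lincomb scale m (\<lambda>i. mat m m (\<lambda>(j, i). P i j) $$ (j, i)) x = lincomb scale m (\<lambda>i. P i j) x"
      if "j < m" for j
      by (rule lincomb_cong) (use that in auto)
    then show ?thesis
      using presented_by_column_relation[OF P] unfolding relation_minors_def sqdet_transpose
      by (intro CollectI exI[of _ "mat m m (\<lambda>(j, i). P i j)"]) auto
  qed
  ultimately have "ideal.span (relation_minors scale m x) = ideal.span {sqdet m P}"
    by (intro antisym ideal.span_minimal) (auto intro: ideal.span_base)
  moreover have "lin_span scale m x = UNIV"
    using P unfolding presented_by_def by blast
  ultimately show ?thesis
    using Fitt_eq_span_relation_minors by simp
qed

section \<open>Extensions by quadratically presented modules\<close>

(* Row r < m is the relation sum_i P i r * beta i - inc (alpha r) = 0 of the family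
   fam_append m beta (inc o alpha), row m + i the relation Q i of alpha. *)
definition extension_block :: "nat \<Rightarrow> nat \<Rightarrow> (nat \<Rightarrow> nat \<Rightarrow> 'r::comm_ring_1) \<Rightarrow> (nat \<Rightarrow> nat \<Rightarrow> 'r) \<Rightarrow> 'r mat" where
  "extension_block m n P Q = mat (m + n) (m + n) (\<lambda>(r, c).
     if r < m then (if c < m then P c r else if c = m + r then -1 else 0)
     else if c < m then 0 else Q (r - m) (c - m))"

lemma det_extension_block:
  "det (extension_block m n P Q) = sqdet m P * det (mat n n (\<lambda>(i, j). Q i j))"
proof -
  have "mat m m (\<lambda>(r, c). if r < m then (if c < m then P c r else if c = m + r then -1 else 0)
      else if c < m then 0 else Q (r - m) (c - m)) = mat m m (\<lambda>(r, c). P c r)"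
    by (rule eq_matI) auto
  moreover have "mat n n (\<lambda>(i, j). if m + i < m then (if m + j < m then P (m + j) (m + i)
      else if m + j = m + (m + i) then -1 else 0) else if m + j < m then 0 else Q (m + i - m) (m + j - m))
      = mat n n (\<lambda>(i, j). Q i j)"
    by (rule eq_matI) auto
  ultimately show ?thesis
    unfolding extension_block_def sqdet_transpose by (subst det_block_lower_left_zero) auto
qed

lemma extension_block_factorization:
  assumes W: "W \<in> carrier_mat (m + n) (m + n)"
    and D: "\<forall>r<m + n. \<forall>i<m. W $$ (r, i) = (\<Sum>j<m. P i j * D r j)"
  shows "W = mat (m + n) (m + n) (\<lambda>(r, c). if c < m then D r c else W $$ (r, c) + (if c < m + m then D r (c - m) else 0))
    * extension_block m n P (\<lambda>i j. if i = j then 1 else 0)" (is "W = ?X * ?B")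
proof (rule eq_matI)
  have X: "?X \<in> carrier_mat (m + n) (m + n)" and B: "?B \<in> carrier_mat (m + n) (m + n)"
    by (simp_all add: extension_block_def)
  fix r c assume "r < dim_row (?X * ?B)" "c < dim_col (?X * ?B)"
  then have r: "r < m + n" and c: "c < m + n"
    using X B by auto
  have "(?X * ?B) $$ (r, c) = (\<Sum>l<m. ?X $$ (r, l) * ?B $$ (l, c)) + (\<Sum>k<n. ?X $$ (r, m + k) * ?B $$ (m + k, c))"
    unfolding index_mult_mat_sum[OF X B r c] by (rule sum_lessThan_add)
  also have "\<dots> = W $$ (r, c)"
  proof (cases "c < m")
    case True
    have "(\<Sum>l<m. ?X $$ (r, l) * ?B $$ (l, c)) = (\<Sum>l<m. P c l * D r l)"
      by (rule sum.cong) (use r c True in \<open>auto simp: extension_block_def mult.commute\<close>)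
    moreover have "(\<Sum>k<n. ?X $$ (r, m + k) * ?B $$ (m + k, c)) = 0"
      using r c True by (auto simp: extension_block_def intro!: sum.neutral)
    ultimately show ?thesis
      using D r True by simp
  next
    case False
    have "(\<Sum>l<m. ?X $$ (r, l) * ?B $$ (l, c)) = (\<Sum>l<m. if l = c - m then - D r l else 0)"
      by (rule sum.cong) (use r c False in \<open>auto simp: extension_block_def\<close>)
    also have "\<dots> = (if c < m + m then - D r (c - m) else 0)"
      using False by auto
    finally have head: "(\<Sum>l<m. ?X $$ (r, l) * ?B $$ (l, c)) = (if c < m + m then - D r (c - m) else 0)" .
    have "(\<Sum>k<n. ?X $$ (r, m + k) * ?B $$ (m + k, c)) = (\<Sum>k<n. if k = c - m then ?X $$ (r, c) else 0)"
      by (rule sum.cong) (use r c False in \<open>auto simp: extension_block_def\<close>)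
    also have "\<dots> = ?X $$ (r, c)"
      using c False by auto
    finally show ?thesis
      using head r c False by simp
  qed
  finally show "W $$ (r, c) = (?X * ?B) $$ (r, c)" ..
qed (use W in \<open>auto simp: extension_block_def\<close>)


(* An exact sequence 0 -> A -> S -> Y -> 0 with S a submodule of an ambient module: the fibre
   product is a subset of a product type, not a type of its own. *)
locale submodule_extension =
  M: Modules.module s + A: Modules.module sA + Y: Modules.module sY +
  pr: module_hom s sY pr + inc: module_hom sA s inc
  for s :: "'r::comm_ring_1 \<Rightarrow> 'm::ab_group_add \<Rightarrow> 'm" and sA :: "'r \<Rightarrow> 'a::ab_group_add \<Rightarrow> 'a"
    and sY :: "'r \<Rightarrow> 'y::ab_group_add \<Rightarrow> 'y" and pr :: "'m \<Rightarrow> 'y" and inc :: "'a \<Rightarrow> 'm" +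
  fixes S :: "'m set"
  assumes subspace_S: "M.subspace S"
    and inj_inc: "inj inc"
    and pr_onto: "pr ` S = UNIV"
    and range_inc: "range inc = {v \<in> S. pr v = 0}"
begin

lemma obtain_lifts:
  obtains \<beta> where "\<forall>i. \<beta> i \<in> S \<and> pr (\<beta> i) = x i"
proof -
  have "\<forall>i. \<exists>v. v \<in> S \<and> pr v = x i"
    using pr_onto by (metis UNIV_I imageE)
  then show ?thesis
    using that by metis
qed

lemma pr_inc [simp]: "pr (inc a) = 0"
  using range_inc by blast

lemma lin_span_lifts_append_kernel:
  assumes x: "lin_span sY m x = UNIV" and \<beta>: "\<forall>i<m. \<beta> i \<in> S \<and> pr (\<beta> i) = x i"
    and \<alpha>: "lin_span sA n \<alpha> = UNIV"
  shows "lin_span s (m + n) (fam_append m \<beta> (\<lambda>k. inc (\<alpha> k))) = S"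
proof (rule antisym)
  have "fam_append m \<beta> (\<lambda>k. inc (\<alpha> k)) l \<in> S" if "l < m + n" for l
    using \<beta> range_inc that by (auto simp: fam_append_def)
  then show "lin_span s (m + n) (fam_append m \<beta> (\<lambda>k. inc (\<alpha> k))) \<subseteq> S"
    unfolding lin_span_def using M.lincomb_in_subspace[OF subspace_S] by blast
  show "S \<subseteq> lin_span s (m + n) (fam_append m \<beta> (\<lambda>k. inc (\<alpha> k)))"
  proof
    fix v assume v: "v \<in> S"
    obtain c where c: "pr v = lincomb sY m c x"
      using x unfolding lin_span_def by (metis UNIV_I imageE)
    have "pr (lincomb s m c \<beta>) = lincomb sY m c x"
      using \<beta> by (auto simp: pr.lincomb_hom intro: lincomb_cong)
    moreover have "lincomb s m c \<beta> \<in> S"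
      using M.lincomb_in_subspace[OF subspace_S] \<beta> by blast
    ultimately have "v - lincomb s m c \<beta> \<in> range inc"
      using v c range_inc M.subspace_diff[OF subspace_S] by (simp add: pr.diff)
    then obtain a where a: "inc a = v - lincomb s m c \<beta>"
      by (metis rangeE)
    obtain e where "a = lincomb sA n e \<alpha>"
      using \<alpha> unfolding lin_span_def by (metis UNIV_I imageE)
    with a have "v = lincomb s m c \<beta> + lincomb s n e (\<lambda>k. inc (\<alpha> k))"
      by (simp add: inc.lincomb_hom)
    also have "\<dots> = lincomb s (m + n) (fam_append m c e) (fam_append m \<beta> (\<lambda>k. inc (\<alpha> k)))"
      unfolding lincomb_fam_append by (auto simp: fam_append_def intro: lincomb_cong)
    finally show "v \<in> lin_span s (m + n) (fam_append m \<beta> (\<lambda>k. inc (\<alpha> k)))"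
      unfolding lin_span_def by blast
  qed
qed

lemma finitely_generated:
  assumes "lin_span sY m x = UNIV" "lin_span sA n \<alpha> = UNIV"
  shows "\<exists>N h. lin_span s N h = S"
proof -
  obtain \<beta> where "\<forall>i. \<beta> i \<in> S \<and> pr (\<beta> i) = x i"
    by (rule obtain_lifts)
  then show ?thesis
    using lin_span_lifts_append_kernel assms by blast
qed

lemma kernel_spanned:
  assumes P: "presented_by sY m x P" and h: "lin_span s N h = S"
    and \<beta>: "\<forall>i. pr (\<beta> i) = x i"
    and cols: "\<forall>j<m. inc (\<alpha> j) = lincomb s m (\<lambda>i. P i j) \<beta>"
    and corrections: "\<forall>l<N. inc (\<alpha> (m + l)) = h l - lincomb s m (C l) \<beta>"
  shows "lin_span sA (m + N) \<alpha> = UNIV"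
proof -
  have "a \<in> lin_span sA (m + N) \<alpha>" for a
  proof -
    have "inc a \<in> lin_span s N h"
      using h range_inc by blast
    then obtain e where e: "inc a = lincomb s N e h"
      unfolding lin_span_def by (metis rangeE)
    define c where "c j = (\<Sum>l<N. e l * C l j)" for j
    have "lincomb s N e h = lincomb s N e (\<lambda>l. inc (\<alpha> (m + l)) + lincomb s m (C l) \<beta>)"
      using corrections by (intro lincomb_cong) auto
    also have "\<dots> = inc (lincomb sA N e (\<lambda>l. \<alpha> (m + l))) + lincomb s m c \<beta>"
      unfolding M.lincomb_add_vectors inc.lincomb_hom c_def by (simp add: M.lincomb_lincomb)
    finally have a_split: "inc a = inc (lincomb sA N e (\<lambda>l. \<alpha> (m + l))) + lincomb s m c \<beta>"
      using e by simp
    from arg_cong[where f = pr, OF this] have "lincomb sY m c x = 0"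
      using \<beta> by (simp add: pr.add pr.lincomb_hom)
    then obtain d where d: "\<forall>i<m. c i = (\<Sum>j<m. P i j * d j)"
      using P unfolding presented_by_def by blast
    have "lincomb s m c \<beta> = lincomb s m (\<lambda>i. \<Sum>j<m. d j * P i j) \<beta>"
      using d by (auto simp: mult.commute intro: lincomb_cong)
    also have "\<dots> = lincomb s m d (\<lambda>j. lincomb s m (\<lambda>i. P i j) \<beta>)"
      by (rule M.lincomb_lincomb[symmetric]) simp
    also have "\<dots> = inc (lincomb sA m d \<alpha>)"
      using cols by (auto simp: inc.lincomb_hom intro: lincomb_cong)
    finally have "inc a = inc (lincomb sA m d \<alpha> + lincomb sA N e (\<lambda>l. \<alpha> (m + l)))"
      using a_split by (simp add: inc.add add.commute)
    also have "\<dots> = inc (lincomb sA (m + N) (fam_append m d e) \<alpha>)"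
      unfolding lincomb_split
      by (intro arg_cong[where f = inc] arg_cong2[where f = "(+)"] lincomb_cong) (auto simp: fam_append_def)
    finally have "a = lincomb sA (m + N) (fam_append m d e) \<alpha>"
      using inj_inc by (simp add: inj_eq)
    then show ?thesis
      unfolding lin_span_def by blast
  qed
  then show ?thesis by blast
qed

lemma kernel_generators:
  assumes P: "presented_by sY m x P" and h: "lin_span s N h = S"
  obtains \<beta> \<alpha> where "\<forall>i. \<beta> i \<in> S \<and> pr (\<beta> i) = x i" "lin_span sA (m + N) \<alpha> = UNIV"
    "\<forall>j<m. inc (\<alpha> j) = lincomb s m (\<lambda>i. P i j) \<beta>"
proof -
  obtain \<beta> where \<beta>: "\<forall>i. \<beta> i \<in> S \<and> pr (\<beta> i) = x i"
    by (rule obtain_lifts)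
  obtain C where C: "\<forall>l<N. pr (h l) = lincomb sY m (C l) x"
    using P obtain_lincomb_coeffs[of N "\<lambda>l. pr (h l)" sY m x] unfolding presented_by_def by auto
  have pr_\<beta>: "pr (lincomb s m c \<beta>) = lincomb sY m c x" for c
    using \<beta> by (simp add: pr.lincomb_hom)
  have \<beta>_S: "lincomb s m c \<beta> \<in> S" for c
    using \<beta> M.lincomb_in_subspace[OF subspace_S] by blast
  define w where "w = fam_append m (\<lambda>j. lincomb s m (\<lambda>i. P i j) \<beta>) (\<lambda>l. h l - lincomb s m (C l) \<beta>)"
  have w_inc: "w l \<in> range inc" if "l < m + N" for l
  proof (cases "l < m")
    case True
    then show ?thesis
      using presented_by_column_relation[OF P] \<beta>_S range_inc by (simp add: w_def fam_append_def pr_\<beta>)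
  next
    case False
    then have "h (l - m) \<in> S"
      using that h M.generator_in_lin_span by auto
    then show ?thesis
      using False that C \<beta>_S range_inc M.subspace_diff[OF subspace_S]
      by (simp add: w_def fam_append_def pr_\<beta> pr.diff)
  qed
  define \<alpha> where "\<alpha> l = inv_into UNIV inc (w l)" for l
  have inc_\<alpha>: "inc (\<alpha> l) = w l" if "l < m + N" for l
    unfolding \<alpha>_def using w_inc[OF that] by (simp add: f_inv_into_f)
  have cols: "\<forall>j<m. inc (\<alpha> j) = lincomb s m (\<lambda>i. P i j) \<beta>"
    using inc_\<alpha> by (simp add: w_def fam_append_def)
  moreover have "\<forall>l<N. inc (\<alpha> (m + l)) = h l - lincomb s m (C l) \<beta>"
    using inc_\<alpha> by (simp add: w_def fam_append_def)
  then have "lin_span sA (m + N) \<alpha> = UNIV"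
    using kernel_spanned[OF P h _ cols] \<beta> by blast
  ultimately show ?thesis
    using that \<beta> by blast
qed

lemma extension_block_relations:
  assumes cols: "\<forall>j<m. inc (\<alpha> j) = lincomb s m (\<lambda>i. P i j) \<beta>" and "m \<le> n"
    and Q: "\<forall>i<n. lincomb sA n (Q i) \<alpha> = 0" and r: "r < m + n"
  shows "lincomb s (m + n) (\<lambda>c. extension_block m n P Q $$ (r, c)) (fam_append m \<beta> (\<lambda>k. inc (\<alpha> k))) = 0"
proof (cases "r < m")
  case True
  have "lincomb s m (\<lambda>c. extension_block m n P Q $$ (r, c)) \<beta> = lincomb s m (\<lambda>i. P i r) \<beta>"
    by (rule lincomb_cong) (use r True in \<open>auto simp: extension_block_def\<close>)
  moreover have "lincomb s n (\<lambda>k. extension_block m n P Q $$ (r, m + k)) (\<lambda>k. inc (\<alpha> k))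
      = lincomb s n (\<lambda>k. if k = r then -1 else 0) (\<lambda>k. inc (\<alpha> k))"
    by (rule lincomb_cong) (use r True in \<open>auto simp: extension_block_def\<close>)
  moreover have "\<dots> = - lincomb s m (\<lambda>i. P i r) \<beta>"
    using True \<open>m \<le> n\<close> cols by (simp add: M.lincomb_indicator)
  ultimately show ?thesis
    by (simp add: lincomb_fam_append)
next
  case False
  have "lincomb s m (\<lambda>c. extension_block m n P Q $$ (r, c)) \<beta> = lincomb s m (\<lambda>_. 0) \<beta>"
    by (rule lincomb_cong) (use r False in \<open>auto simp: extension_block_def\<close>)
  moreover have "lincomb s n (\<lambda>k. extension_block m n P Q $$ (r, m + k)) (\<lambda>k. inc (\<alpha> k))
      = inc (lincomb sA n (Q (r - m)) \<alpha>)"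
    unfolding inc.lincomb_hom by (rule lincomb_cong) (use r False in \<open>auto simp: extension_block_def\<close>)
  ultimately show ?thesis
    using Q r False by (simp add: lincomb_fam_append)
qed

lemma relation_tail_corrected:
  assumes cols: "\<forall>j<m. inc (\<alpha> j) = lincomb s m (\<lambda>i. P i j) \<beta>" and "m \<le> n"
    and row: "lincomb s (m + n) w (fam_append m \<beta> (\<lambda>k. inc (\<alpha> k))) = 0"
    and d: "\<forall>i<m. w i = (\<Sum>j<m. P i j * d j)"
  shows "lincomb sA n (\<lambda>k. w (m + k) + (if k < m then d k else 0)) \<alpha> = 0"
proof -
  have "lincomb s n (\<lambda>k. if k < m then d k else 0) (\<lambda>k. inc (\<alpha> k))
      = lincomb s m d (\<lambda>j. lincomb s m (\<lambda>i. P i j) \<beta>)"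
    using cols \<open>m \<le> n\<close> by (auto simp: M.lincomb_truncate intro: lincomb_cong)
  also have "\<dots> = lincomb s m w \<beta>"
    using d by (simp add: M.lincomb_lincomb mult.commute cong: lincomb_cong)
  finally have "inc (lincomb sA n (\<lambda>k. w (m + k) + (if k < m then d k else 0)) \<alpha>)
      = lincomb s (m + n) w (fam_append m \<beta> (\<lambda>k. inc (\<alpha> k)))"
    by (simp add: lincomb_fam_append inc.lincomb_hom M.lincomb_add_coeffs[symmetric] add.commute)
  with row inj_inc show ?thesis
    by (simp add: inc.inj_iff_eq_0)
qed

lemma relation_minors_extension_subset:
  assumes P: "presented_by sY m x P" and \<beta>: "\<forall>i. pr (\<beta> i) = x i"
    and cols: "\<forall>j<m. inc (\<alpha> j) = lincomb s m (\<lambda>i. P i j) \<beta>" and "m \<le> n"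
  shows "relation_minors s (m + n) (fam_append m \<beta> (\<lambda>k. inc (\<alpha> k)))
    \<subseteq> ideal_prod (ideal.span (relation_minors sA n \<alpha>)) (ideal.span {sqdet m P})"
proof
  fix z assume "z \<in> relation_minors s (m + n) (fam_append m \<beta> (\<lambda>k. inc (\<alpha> k)))"
  then obtain W where z: "z = det W" and W: "W \<in> carrier_mat (m + n) (m + n)"
    and rows: "\<forall>r<m + n. lincomb s (m + n) (\<lambda>c. W $$ (r, c)) (fam_append m \<beta> (\<lambda>k. inc (\<alpha> k))) = 0"
    unfolding relation_minors_def by blast
  have "lincomb sY m (\<lambda>i. W $$ (r, i)) x = 0" if "r < m + n" for r
    using arg_cong[where f = pr, OF rows[rule_format, OF that]] \<beta>
    by (simp add: lincomb_fam_append pr.add pr.lincomb_hom)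
  then obtain D where D: "\<forall>r<m + n. \<forall>i<m. W $$ (r, i) = (\<Sum>j<m. P i j * D r j)"
    using presented_by_relation_coeffs[OF P, of "m + n" "\<lambda>r i. W $$ (r, i)"] by blast
  define X where "X = mat (m + n) (m + n)
    (\<lambda>(r, c). if c < m then D r c else W $$ (r, c) + (if c < m + m then D r (c - m) else 0))"
  have X: "X \<in> carrier_mat (m + n) (m + n)"
    by (simp add: X_def)
  have "W = X * extension_block m n P (\<lambda>i j. if i = j then 1 else 0)"
    unfolding X_def by (rule extension_block_factorization[OF W D])
  moreover have "mat n n (\<lambda>(i, j). if i = j then 1 else 0) = 1\<^sub>m n"
    by (rule eq_matI) auto
  then have "det (extension_block m n P (\<lambda>i j. if i = j then 1 else 0)) = sqdet m P"
    by (metis det_extension_block det_one mult_1_right)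
  ultimately have "z = det X * sqdet m P"
    using z det_mult[OF X, of "extension_block m n P (\<lambda>i j. if i = j then 1 else 0)"]
    by (simp add: extension_block_def)
  moreover have "det X \<in> ideal.span (relation_minors sA n \<alpha>)"
  proof (rule det_mem_span_relation_minors[OF X], intro allI impI)
    fix r assume r: "r < m + n"
    have "lincomb sA n (\<lambda>k. X $$ (r, m + k)) \<alpha>
        = lincomb sA n (\<lambda>k. W $$ (r, m + k) + (if k < m then D r k else 0)) \<alpha>"
      by (rule lincomb_cong) (use r in \<open>auto simp: X_def\<close>)
    also have "\<dots> = 0"
      using relation_tail_corrected[OF cols \<open>m \<le> n\<close>] rows D r by blast
    finally show "lincomb sA n (\<lambda>k. X $$ (r, m + k)) \<alpha> = 0" .
  qed
  ultimately show "z \<in> ideal_prod (ideal.span (relation_minors sA n \<alpha>)) (ideal.span {sqdet m P})"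
    by (simp add: mult_mem_ideal_prod ideal.span_base)
qed

lemma mult_sqdet_mem_relation_minors_extension:
  assumes cols: "\<forall>j<m. inc (\<alpha> j) = lincomb s m (\<lambda>i. P i j) \<beta>" and "m \<le> n"
    and "a \<in> relation_minors sA n \<alpha>"
  shows "a * sqdet m P \<in> relation_minors s (m + n) (fam_append m \<beta> (\<lambda>k. inc (\<alpha> k)))"
proof -
  obtain Q where a: "a = det Q" and Q: "Q \<in> carrier_mat n n"
    and rows: "\<forall>i<n. lincomb sA n (\<lambda>j. Q $$ (i, j)) \<alpha> = 0"
    using assms(3) unfolding relation_minors_def by blast
  have "mat n n (\<lambda>(i, j). Q $$ (i, j)) = Q"
    by (rule eq_matI) (use Q in auto)
  then have "a * sqdet m P = det (extension_block m n P (\<lambda>i j. Q $$ (i, j)))"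
    using a by (simp add: det_extension_block mult.commute)
  moreover have "\<forall>r<m + n. lincomb s (m + n) (\<lambda>c. extension_block m n P (\<lambda>i j. Q $$ (i, j)) $$ (r, c))
      (fam_append m \<beta> (\<lambda>k. inc (\<alpha> k))) = 0"
    using extension_block_relations[OF cols \<open>m \<le> n\<close>, of "\<lambda>i j. Q $$ (i, j)"] rows by blast
  ultimately show ?thesis
    unfolding relation_minors_def
    by (intro CollectI exI[of _ "extension_block m n P (\<lambda>i j. Q $$ (i, j))"]) (auto simp: extension_block_def)
qed

lemma span_relation_minors_extension:
  assumes P: "presented_by sY m x P" and \<beta>: "\<forall>i. pr (\<beta> i) = x i"
    and cols: "\<forall>j<m. inc (\<alpha> j) = lincomb s m (\<lambda>i. P i j) \<beta>" and "m \<le> n"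
  shows "ideal.span (relation_minors s (m + n) (fam_append m \<beta> (\<lambda>k. inc (\<alpha> k))))
    = ideal_prod (ideal.span (relation_minors sA n \<alpha>)) (ideal.span {sqdet m P})"
proof (rule antisym)
  show "ideal.span (relation_minors s (m + n) (fam_append m \<beta> (\<lambda>k. inc (\<alpha> k))))
      \<subseteq> ideal_prod (ideal.span (relation_minors sA n \<alpha>)) (ideal.span {sqdet m P})"
    using relation_minors_extension_subset[OF assms] by (intro ideal.span_minimal subspace_ideal_prod)
  show "ideal_prod (ideal.span (relation_minors sA n \<alpha>)) (ideal.span {sqdet m P})
      \<subseteq> ideal.span (relation_minors s (m + n) (fam_append m \<beta> (\<lambda>k. inc (\<alpha> k))))"
    unfolding ideal_prod_span
    using mult_sqdet_mem_relation_minors_extension[OF cols \<open>m \<le> n\<close>] by (intro ideal.span_mono) blast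
qed

lemma span_relation_minors_eq_Fitt_prod:
  assumes "quad_pres sY" and h: "lin_span s N h = S"
  shows "ideal.span (relation_minors s N h) = ideal_prod (Fitt sA) (Fitt sY)"
proof -
  obtain m x P where P: "presented_by sY m x P"
    using quad_pres_presented_by assms(1) by blast
  obtain \<beta> \<alpha> where \<beta>: "\<forall>i. \<beta> i \<in> S \<and> pr (\<beta> i) = x i" and \<alpha>: "lin_span sA (m + N) \<alpha> = UNIV"
    and cols: "\<forall>j<m. inc (\<alpha> j) = lincomb s m (\<lambda>i. P i j) \<beta>"
    using kernel_generators[OF P h] by blast
  have "lin_span s (m + (m + N)) (fam_append m \<beta> (\<lambda>k. inc (\<alpha> k))) = S"
    using lin_span_lifts_append_kernel P \<beta> \<alpha> unfolding presented_by_def by blast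
  then have "ideal.span (relation_minors s N h)
      = ideal.span (relation_minors s (m + (m + N)) (fam_append m \<beta> (\<lambda>k. inc (\<alpha> k))))"
    using M.span_relation_minors_eq h by simp
  also have "\<dots> = ideal_prod (ideal.span (relation_minors sA (m + N) \<alpha>)) (ideal.span {sqdet m P})"
    using span_relation_minors_extension[OF P _ cols] \<beta> by simp
  also have "\<dots> = ideal_prod (Fitt sA) (Fitt sY)"
    using A.Fitt_eq_span_relation_minors[OF \<alpha>] Y.Fitt_presented_by[OF P] by simp
  finally show ?thesis .
qed

end

section \<open>Fibre products\<close>

definition prod_scale :: "('r \<Rightarrow> 'b \<Rightarrow> 'b) \<Rightarrow> ('r \<Rightarrow> 'c \<Rightarrow> 'c) \<Rightarrow> 'r \<Rightarrow> 'b \<times> 'c \<Rightarrow> 'b \<times> 'c" where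
  "prod_scale s1 s2 r p = (s1 r (fst p), s2 r (snd p))"

definition fibre_product :: "('b \<Rightarrow> 'd) \<Rightarrow> ('c \<Rightarrow> 'd) \<Rightarrow> ('b \<times> 'c) set" where
  "fibre_product g g' = {p. g (fst p) = g' (snd p)}"

lemma module_prod_scale:
  assumes "module s1" "module s2"
  shows "module (prod_scale s1 s2)"
proof -
  interpret s1: Modules.module s1 by (rule assms(1))
  interpret s2: Modules.module s2 by (rule assms(2))
  show ?thesis
    by unfold_locales (auto simp: prod_scale_def prod_eq_iff s1.scale_right_distrib s2.scale_right_distrib
        s1.scale_left_distrib s2.scale_left_distrib)
qed

lemma lincomb_prod_scale:
  "lincomb (prod_scale s1 s2) n c h = (lincomb s1 n c (\<lambda>i. fst (h i)), lincomb s2 n c (\<lambda>i. snd (h i)))"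
  by (simp add: lincomb_def prod_scale_def prod_eq_iff fst_sum snd_sum)

lemma relation_minors_swap:
  "relation_minors (prod_scale s2 s1) n (\<lambda>i. prod.swap (h i)) = relation_minors (prod_scale s1 s2) n h"
  unfolding relation_minors_def lincomb_prod_scale by (auto simp: zero_prod_def)

lemma lin_span_swap_eq_fibre_product:
  "lin_span (prod_scale s2 s1) n (\<lambda>i. prod.swap (h i)) = fibre_product g' g \<longleftrightarrow>
   lin_span (prod_scale s1 s2) n h = fibre_product g g'"
proof -
  have "fibre_product g' g = prod.swap ` fibre_product g g'"
    by (auto simp: fibre_product_def image_iff)
  moreover have "lin_span (prod_scale s2 s1) n (\<lambda>i. prod.swap (h i)) = prod.swap ` lin_span (prod_scale s1 s2) n h"
    unfolding lin_span_def lincomb_prod_scale by auto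
  ultimately show ?thesis
    by (simp add: inj_image_eq_iff)
qed

lemma ex_lin_span_swap_eq_fibre_product:
  "(\<exists>N h. lin_span (prod_scale s2 s1) N h = fibre_product g' g) \<longleftrightarrow>
   (\<exists>N h. lin_span (prod_scale s1 s2) N h = fibre_product g g')"
proof
  assume "\<exists>N h. lin_span (prod_scale s2 s1) N h = fibre_product g' g"
  then obtain N h where "lin_span (prod_scale s2 s1) N h = fibre_product g' g"
    by blast
  then have "lin_span (prod_scale s1 s2) N (\<lambda>i. prod.swap (h i)) = fibre_product g g'"
    using lin_span_swap_eq_fibre_product[of s2 s1 N "\<lambda>i. prod.swap (h i)" g' g] by simp
  then show "\<exists>N h. lin_span (prod_scale s1 s2) N h = fibre_product g g'"
    by blast
next
  assume "\<exists>N h. lin_span (prod_scale s1 s2) N h = fibre_product g g'"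
  then show "\<exists>N h. lin_span (prod_scale s2 s1) N h = fibre_product g' g"
    using lin_span_swap_eq_fibre_product by blast
qed

lemma snd_fibre_product: "surj g \<Longrightarrow> snd ` fibre_product g g' = UNIV"
proof -
  assume "surj g"
  have "y \<in> snd ` fibre_product g g'" for y
  proof -
    obtain b where "g b = g' y"
      using \<open>surj g\<close> by (metis surjD)
    then show ?thesis
      unfolding fibre_product_def by (intro image_eqI[of _ _ "(b, y)"]) auto
  qed
  then show ?thesis by blast
qed

lemma range_fst_embedding_fibre_product:
  assumes "range f = {b. g b = 0}" "g' 0 = 0"
  shows "range (\<lambda>a. (f a, 0)) = {p \<in> fibre_product g g'. snd p = 0}"
proof -
  have "p \<in> range (\<lambda>a. (f a, 0)) \<longleftrightarrow> p \<in> fibre_product g g' \<and> snd p = 0" for p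
  proof (cases p)
    case (Pair b y)
    have "(b, y) \<in> range (\<lambda>a. (f a, 0)) \<longleftrightarrow> b \<in> range f \<and> y = 0"
      by auto
    also have "\<dots> \<longleftrightarrow> (b, y) \<in> fibre_product g g' \<and> y = 0"
      using assms by (auto simp: fibre_product_def)
    finally show ?thesis
      using Pair by simp
  qed
  then show ?thesis
    by blast
qed

lemma fibre_product_extension:
  assumes "module sA" "module sB" "module sB'" "short_exact sA sB sC f g" "module_hom sB' sC g'"
  shows "submodule_extension (prod_scale sB sB') sA sB' snd (\<lambda>a. (f a, 0)) (fibre_product g g')"
proof -
  have f: "module_hom sA sB f" and g: "module_hom sB sC g" and "inj f" "surj g"
    and exact: "range f = {b. g b = 0}"
    using assms(4) unfolding short_exact_def by auto
  interpret f: module_hom sA sB f by (rule f)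
  interpret g: module_hom sB sC g by (rule g)
  interpret g': module_hom sB' sC g' by (rule assms(5))
  interpret P: Modules.module "prod_scale sB sB'"
    using module_prod_scale assms(2,3) .
  have "P.subspace (fibre_product g g')"
    by (rule P.subspaceI) (auto simp: fibre_product_def prod_scale_def g.add g'.add g.scale g'.scale)
  moreover have "module_hom (prod_scale sB sB') sB' snd"
    using P.module_axioms assms(3) by (simp add: module_hom_iff prod_scale_def)
  moreover have "module_hom sA (prod_scale sB sB') (\<lambda>a. (f a, 0))"
    using P.module_axioms assms(1) by (simp add: module_hom_iff prod_scale_def f.add f.scale)
  ultimately show ?thesis
    using assms(1,3) P.module_axioms \<open>inj f\<close> snd_fibre_product[of g g', OF \<open>surj g\<close>]
      range_fst_embedding_fibre_product[of f g g', OF exact g'.zero]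
    by (simp add: submodule_extension_def submodule_extension_axioms_def inj_def)
qed

lemma Fitt_prod_eq_span_relation_minors_fibre_product:
  assumes "module sA" "module sB" "module sB'" "quad_pres sB'"
    and "short_exact sA sB sC f g" "module_hom sB' sC g'"
    and "lin_span (prod_scale sB sB') N h = fibre_product g g'"
  shows "ideal_prod (Fitt sA) (Fitt sB') = ideal.span (relation_minors (prod_scale sB sB') N h)"
proof -
  interpret submodule_extension "prod_scale sB sB'" sA sB' snd "\<lambda>a. (f a, 0)" "fibre_product g g'"
    using assms(1-3,5,6) by (rule fibre_product_extension)
  show ?thesis
    using span_relation_minors_eq_Fitt_prod[OF assms(4,7)] by simp
qed

lemma Fitt_prod_eq_zero_if_fibre_product_not_finitely_generated:
  assumes "module sA" "module sB" "module sB'" "quad_pres sB'"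
    and "short_exact sA sB sC f g" "module_hom sB' sC g'"
    and "\<nexists>N h. lin_span (prod_scale sB sB') N h = fibre_product g g'"
  shows "ideal_prod (Fitt sA) (Fitt sB') = {0}"
proof -
  interpret submodule_extension "prod_scale sB sB'" sA sB' snd "\<lambda>a. (f a, 0)" "fibre_product g g'"
    using assms(1-3,5,6) by (rule fibre_product_extension)
  obtain m x P where "presented_by sB' m x P"
    using assms(4) quad_pres_presented_by by blast
  then have "\<nexists>n \<alpha>. lin_span sA n \<alpha> = UNIV"
    using finitely_generated assms(7) unfolding presented_by_def by blast
  then show ?thesis
    by (simp add: Fitt_eq_zero ideal_prod_zero_left)
qed

theorem lemma2p7:
  fixes sA :: "'r::comm_ring_1 \<Rightarrow> 'a::ab_group_add \<Rightarrow> 'a"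
    and sB :: "'r \<Rightarrow> 'b::ab_group_add \<Rightarrow> 'b"
    and sC :: "'r \<Rightarrow> 'c::ab_group_add \<Rightarrow> 'c"
    and sA' :: "'r \<Rightarrow> 'a2::ab_group_add \<Rightarrow> 'a2"
    and sB' :: "'r \<Rightarrow> 'b2::ab_group_add \<Rightarrow> 'b2"
    and f :: "'a \<Rightarrow> 'b" and g :: "'b \<Rightarrow> 'c"
    and f' :: "'a2 \<Rightarrow> 'b2" and g' :: "'b2 \<Rightarrow> 'c"
  assumes "module sA" "module sB" "module sC" "module sA'" "module sB'"
    and "quad_pres sB" "quad_pres sB'"
    and "short_exact sA sB sC f g"
    and "short_exact sA' sB' sC f' g'"
  shows "ideal_prod (Fitt sA) (Fitt sB') = ideal_prod (Fitt sA') (Fitt sB)"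
proof -
  have "module_hom sB sC g" "module_hom sB' sC g'"
    using assms(8,9) unfolding short_exact_def by blast+
  note left = assms(1,2,5,7,8) \<open>module_hom sB' sC g'\<close>
    and right = assms(4,5,2,6,9) \<open>module_hom sB sC g\<close>
  show ?thesis
  proof (cases "\<exists>N h. lin_span (prod_scale sB sB') N h = fibre_product g g'")
    case True
    then obtain N h where h: "lin_span (prod_scale sB sB') N h = fibre_product g g'"
      by blast
    have "ideal_prod (Fitt sA) (Fitt sB') = ideal.span (relation_minors (prod_scale sB sB') N h)"
      using Fitt_prod_eq_span_relation_minors_fibre_product[OF left h] .
    also have "\<dots> = ideal.span (relation_minors (prod_scale sB' sB) N (\<lambda>i. prod.swap (h i)))"
      by (simp add: relation_minors_swap)
    also have "\<dots> = ideal_prod (Fitt sA') (Fitt sB)"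
    proof (rule Fitt_prod_eq_span_relation_minors_fibre_product[OF right, symmetric])
      show "lin_span (prod_scale sB' sB) N (\<lambda>i. prod.swap (h i)) = fibre_product g' g"
        using h by (simp add: lin_span_swap_eq_fibre_product)
    qed
    finally show ?thesis .
  next
    case False
    then have "\<nexists>N h. lin_span (prod_scale sB' sB) N h = fibre_product g' g"
      using ex_lin_span_swap_eq_fibre_product[of sB' sB g' g] by blast
    with False show ?thesis
      using Fitt_prod_eq_zero_if_fibre_product_not_finitely_generated[OF left]
        Fitt_prod_eq_zero_if_fibre_product_not_finitely_generated[OF right] by simp
  qed
qed

end
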